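(* Let $0<p<1$ be fixed, $b=1/(1-p)$, and $c=c(n)=\lfloor \log_b n-\log_b[(\log_b n)(\log n)]\rfloor+2$. Let $X_c$ be the number of $c$-element vertex sets of $G(n,p,c)$ that are both dominating and tropical. Then $\mathbb{E}(X_c)\to\infty$ as $n\to\infty$.
   Context: $G(n,p)$ is the random graph on $n$ vertices in which each of the $\binom n2$ edges is present independently with probability $p$. For a positive integer $c$, $G(n,p,c)$ is obtained from $G(n,p)$ by colouring each vertex with one of the colours $1,\dots,c$ uniformly at random, independently of each other and of the edges. A vertex set is tropical if every one of the $c$ colours appears on at least one of its vertices. $\log$ denotes the natural logarithm. *)

theory Defs
  imports "HOL-Probability.Probability"
begin

text \<open>Vertices of G(n,p,c) are 0,...,n-1. An edge is a two-element set of vertices;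
  a graph is given by its edge indicator E :: nat set \<Rightarrow> bool, a colouring by col :: nat \<Rightarrow> nat
  with colours 1..c.\<close>

definition pairs :: "nat \<Rightarrow> nat set set" where
  "pairs n = {{i, j} | i j. i < n \<and> j < n \<and> i \<noteq> j}"

definition Gnp :: "nat \<Rightarrow> real \<Rightarrow> (nat set \<Rightarrow> bool) pmf" where
  "Gnp n p = Pi_pmf (pairs n) False (\<lambda>_. bernoulli_pmf p)"

definition colouring :: "nat \<Rightarrow> nat \<Rightarrow> (nat \<Rightarrow> nat) pmf" where
  "colouring n c = Pi_pmf {..<n} 0 (\<lambda>_. pmf_of_set {1..c})"

definition Gnpc :: "nat \<Rightarrow> real \<Rightarrow> nat \<Rightarrow> ((nat set \<Rightarrow> bool) \<times> (nat \<Rightarrow> nat)) pmf" where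
  "Gnpc n p c = pair_pmf (Gnp n p) (colouring n c)"

definition dominating :: "nat \<Rightarrow> (nat set \<Rightarrow> bool) \<Rightarrow> nat set \<Rightarrow> bool" where
  "dominating n E S \<longleftrightarrow> S \<subseteq> {..<n} \<and> (\<forall>v \<in> {..<n} - S. \<exists>u \<in> S. E {u, v})"

definition tropical :: "nat \<Rightarrow> (nat \<Rightarrow> nat) \<Rightarrow> nat set \<Rightarrow> bool" where
  "tropical c col S \<longleftrightarrow> (\<forall>k \<in> {1..c}. \<exists>v \<in> S. col v = k)"

definition Xc :: "nat \<Rightarrow> nat \<Rightarrow> (nat set \<Rightarrow> bool) \<times> (nat \<Rightarrow> nat) \<Rightarrow> nat" where
  "Xc n c \<omega> = card {S. S \<subseteq> {..<n} \<and> card S = c \<and> dominating n (fst \<omega>) S \<and> tropical c (snd \<omega>) S}"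

definition cfun :: "real \<Rightarrow> nat \<Rightarrow> nat" where
  "cfun p n = (let b = 1 / (1 - p) in
     nat (\<lfloor>log b (real n) - log b (log b (real n) * ln (real n))\<rfloor> + 2))"

end

theory Submission
  imports Defs "HOL-Combinatorics.Permutations" "HOL-Real_Asymp.Real_Asymp"
begin

text \<open>By linearity of expectation and the independence of graph and colouring, E X_c is the
  sum over all c-sets S of P(S dominating) P(S tropical). Each vertex outside S independently
  has a neighbour in S with probability 1 - q^c, where q = 1 - p, and S is tropical at least
  when its colours form a bijection onto {1..c}; hence
  E X_c \<ge> (n choose c) (1 - q^c)^(n-c) c!/c^c \<ge> (n/c^2)^c (1 - q^c)^n.
  The choice of c gives q^c \<le> q (log_b n)(ln n)/n, so (1 - q^c)^n \<ge> exp(-(q + o(1)) (ln n)^2/ln b),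
  whereas (n/c^2)^c = exp((1 - o(1)) (ln n)^2/ln b). Since q < 1, the product tends to infinity.\<close>

lemma finite_pairs: "finite (pairs n)"
  by (rule finite_subset[of _ "Pow {..<n}"]) (auto simp: pairs_def)

lemma measure_pair_pmf_Times:
  "measure_pmf.prob (pair_pmf M N) (A \<times> B) = measure_pmf.prob M A * measure_pmf.prob N B"
proof -
  have "(A \<times> B) \<inter> set_pmf (pair_pmf M N) = (A \<inter> set_pmf M) \<times> (B \<inter> set_pmf N)"
    by auto
  moreover have "measure_pmf.prob (pair_pmf M N) ((A \<inter> set_pmf M) \<times> (B \<inter> set_pmf N))
      = measure_pmf.prob M (A \<inter> set_pmf M) * measure_pmf.prob N (B \<inter> set_pmf N)"
    by (rule measure_pmf_prob_product) (auto intro: countable_subset[OF _ countable_set_pmf])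
  ultimately show ?thesis
    by (metis measure_Int_set_pmf)
qed

lemma prob_Gnp_no_edge_in:
  assumes "0 \<le> p" "p \<le> 1" and K: "K \<subseteq> pairs n"
  shows "measure_pmf.prob (Gnp n p) {E. \<forall>e\<in>K. \<not> E e} = (1 - p) ^ card K"
proof -
  have "{E. \<forall>e\<in>K. \<not> E e} = Pi (pairs n) (\<lambda>e. if e \<in> K then {False} else UNIV)"
    using K by (auto simp: Pi_def)
  then have "measure_pmf.prob (Gnp n p) {E. \<forall>e\<in>K. \<not> E e}
      = (\<Prod>e\<in>pairs n. measure_pmf.prob (bernoulli_pmf p) (if e \<in> K then {False} else UNIV))"
    unfolding Gnp_def by (simp add: measure_Pi_pmf_Pi finite_pairs)
  also have "\<dots> = (\<Prod>e\<in>K. 1 - p)"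
    using assms by (intro prod.mono_neutral_cong_right[OF finite_pairs K]) (auto simp: measure_pmf_single)
  finally show ?thesis
    by simp
qed

text \<open>The events "v has a neighbour in S", for v outside S, depend on the pairwise disjoint
  edge sets {{u, v} | u \<in> S}, hence are independent.\<close>
lemma prob_Gnp_dominating:
  fixes p :: real
  assumes p: "0 \<le> p" "p \<le> 1" and S: "S \<subseteq> {..<n}" "card S = c" and "c < n"
  shows "measure_pmf.prob (Gnp n p) {E. dominating n E S} = (1 - (1 - p) ^ c) ^ (n - c)"
proof -
  define V where "V = {..<n} - S"
  define K where "K = (\<lambda>v. (\<lambda>u. {u, v}) ` S)"
  define M where "M = measure_pmf (Gnp n p)"
  have M: "prob_space M"
    unfolding M_def by (rule prob_space_measure_pmf)
  have "finite S"
    using S finite_subset by blast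
  have card_V: "card V = n - c" and "V \<noteq> {}" "finite V"
    using S \<open>finite S\<close> \<open>c < n\<close> by (auto simp: V_def card_Diff_subset)
  have K_pairs: "K v \<subseteq> pairs n" if "v \<in> V" for v
    using that S unfolding K_def V_def pairs_def by auto
  have card_K: "card (K v) = c" if "v \<in> V" for v
  proof -
    have "inj_on (\<lambda>u. {u, v}) S"
      using that unfolding V_def inj_on_def by (auto simp: doubleton_eq_iff)
    then show ?thesis
      unfolding K_def using S by (simp add: card_image)
  qed
  have "disjoint_family_on K V"
    unfolding disjoint_family_on_def K_def V_def by (auto simp: doubleton_eq_iff)
  with K_pairs indep_vars_Pi_pmf[OF finite_pairs, of n False "\<lambda>_. bernoulli_pmf p"]
  have indep: "prob_space.indep_vars M (\<lambda>v. PiM (K v) (\<lambda>_. count_space UNIV))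
      (\<lambda>v E. restrict E (K v)) V"
    unfolding M_def Gnp_def by (intro prob_space.indep_vars_restrict) (auto intro: prob_space_measure_pmf)
  define A where "A = (\<lambda>v. {g \<in> space (PiM (K v) (\<lambda>_. count_space UNIV)). \<exists>e\<in>K v. g e})"
  have A_sets: "A v \<in> sets (PiM (K v) (\<lambda>_. count_space UNIV))" for v
    unfolding A_def
    by measurable (simp_all add: K_def \<open>finite S\<close> measurable_component_singleton)
  have "(\<lambda>E. restrict E (K v)) -` A v \<inter> space M = {E. \<exists>e\<in>K v. E e}" for v
    unfolding A_def M_def by (auto simp: space_PiM)
  moreover have "(\<Inter>v\<in>V. {E. \<exists>e\<in>K v. E e}) = {E. dominating n E S}"
    using S \<open>V \<noteq> {}\<close> unfolding dominating_def V_def K_def by auto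
  ultimately have "measure M {E. dominating n E S} = (\<Prod>v\<in>V. measure M {E. \<exists>e\<in>K v. E e})"
    using prob_space.indep_varsD[OF M indep \<open>V \<noteq> {}\<close> \<open>finite V\<close> subset_refl, of A]
      A_sets unfolding M_def by simp
  also have "\<dots> = (\<Prod>v\<in>V. 1 - (1 - p) ^ c)"
  proof (rule prod.cong[OF refl])
    fix v assume "v \<in> V"
    have "{E. \<exists>e\<in>K v. E e} = space M - {E. \<forall>e\<in>K v. \<not> E e}"
      by (auto simp: M_def)
    then show "measure M {E. \<exists>e\<in>K v. E e} = 1 - (1 - p) ^ c"
      using prob_Gnp_no_edge_in[OF p K_pairs[OF \<open>v \<in> V\<close>]] card_K[OF \<open>v \<in> V\<close>]
      unfolding M_def using measure_pmf.prob_compl[of "{E. \<forall>e\<in>K v. \<not> E e}" "Gnp n p"] by simp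
  qed
  finally show ?thesis
    using card_V by (simp add: M_def)
qed

lemma prob_colouring_eq_on:
  assumes S: "S \<subseteq> {..<n}" and g: "\<And>v. v \<in> S \<Longrightarrow> g v \<in> {1..c}"
  shows "measure_pmf.prob (colouring n c) {f. \<forall>v\<in>S. f v = g v} = (1 / real c) ^ card S"
proof -
  have "{f. \<forall>v\<in>S. f v = g v} = Pi {..<n} (\<lambda>v. if v \<in> S then {g v} else UNIV)"
    using S by (auto simp: Pi_def)
  then have "measure_pmf.prob (colouring n c) {f. \<forall>v\<in>S. f v = g v}
      = (\<Prod>v<n. measure_pmf.prob (pmf_of_set {1..c}) (if v \<in> S then {g v} else UNIV))"
    unfolding colouring_def by (simp add: measure_Pi_pmf_Pi)
  also have "\<dots> = (\<Prod>v\<in>S. 1 / real c)"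
  proof (intro prod.mono_neutral_cong_right[OF _ S])
    fix v assume "v \<in> S"
    then have "g v \<in> {1..c}" "{1..c} \<noteq> {}"
      using g by blast+
    then show "measure_pmf.prob (pmf_of_set {1..c}) (if v \<in> S then {g v} else UNIV) = 1 / real c"
      using \<open>v \<in> S\<close> by (simp add: measure_pmf_single)
  qed auto
  finally show ?thesis
    by simp
qed

text \<open>Every bijection from S onto the colours makes S tropical; these colourings are
  counted through the permutations \<pi> of {1..c}, composed with a fixed bijection h.\<close>
lemma prob_colouring_tropical_ge:
  assumes S: "S \<subseteq> {..<n}" "card S = c"
  shows "fact c / real c ^ c \<le> measure_pmf.prob (colouring n c) {f. tropical c f S}"
proof -
  have "finite S"
    using S finite_subset by blast
  then obtain h where h: "bij_betw h S {1..c}"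
    using finite_same_card_bij[of S "{1..c}"] S by auto
  define P where "P = {\<pi>. \<pi> permutes {1..c}}"
  define B where "B = (\<lambda>\<pi>. {f :: nat \<Rightarrow> nat. \<forall>v\<in>S. f v = \<pi> (h v)})"
  have h_onto: "\<exists>v\<in>S. h v = k" if "k \<in> {1..c}" for k
    using h that by (metis bij_betw_imp_surj_on imageE)
  have "\<pi> = \<sigma>" if "\<pi> \<in> P" "\<sigma> \<in> P" "f \<in> B \<pi>" "f \<in> B \<sigma>" for \<pi> \<sigma> f
  proof
    fix k
    show "\<pi> k = \<sigma> k"
    proof (cases "k \<in> {1..c}")
      case True
      then show ?thesis
        using h_onto that by (auto simp: B_def)
    next
      case False
      then show ?thesis
        using that by (simp add: P_def permutes_not_in)
    qed
  qed
  then have disj: "disjoint_family_on B P"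
    unfolding disjoint_family_on_def by blast
  have "B \<pi> \<subseteq> {f. tropical c f S}" if "\<pi> \<in> P" for \<pi>
  proof (intro subsetI CollectI, unfold tropical_def, intro ballI)
    fix f k assume f: "f \<in> B \<pi>" and k: "k \<in> {1..c}"
    have "k \<in> \<pi> ` {1..c}"
      using that k by (simp add: P_def permutes_image)
    then obtain j where "j \<in> {1..c}" "\<pi> j = k"
      by blast
    then show "\<exists>v\<in>S. f v = k"
      using h_onto f by (auto simp: B_def)
  qed
  then have "measure_pmf.prob (colouring n c) (\<Union>\<pi>\<in>P. B \<pi>)
      \<le> measure_pmf.prob (colouring n c) {f. tropical c f S}"
    by (intro measure_pmf.finite_measure_mono) auto
  moreover have "measure_pmf.prob (colouring n c) (\<Union>\<pi>\<in>P. B \<pi>)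
      = (\<Sum>\<pi>\<in>P. measure_pmf.prob (colouring n c) (B \<pi>))"
    using disj by (intro measure_pmf.finite_measure_finite_Union) (auto simp: P_def finite_permutations)
  moreover have "measure_pmf.prob (colouring n c) (B \<pi>) = (1 / real c) ^ c" if "\<pi> \<in> P" for \<pi>
  proof -
    have "\<pi> (h v) \<in> {1..c}" if "v \<in> S" for v
      using \<open>\<pi> \<in> P\<close> bij_betwE[OF h] that unfolding P_def by (metis mem_Collect_eq permutes_in_image)
    then show ?thesis
      unfolding B_def using S by (subst prob_colouring_eq_on) auto
  qed
  moreover have "card P = fact c"
    unfolding P_def using card_permutations[of "{1..c}" c] by simp
  ultimately show ?thesis
    by (simp add: power_one_over)
qed

lemma expectation_Xc_ge:
  fixes p :: real
  assumes p: "0 \<le> p" "p \<le> 1" and "c < n"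
  shows "real (n choose c) * (1 - (1 - p) ^ c) ^ (n - c) * (fact c / real c ^ c)
    \<le> measure_pmf.expectation (Gnpc n p c) (\<lambda>\<omega>. real (Xc n c \<omega>))"
proof -
  define \<K> where "\<K> = {S. S \<subseteq> {..<n} \<and> card S = c}"
  define A where "A = (\<lambda>S. {E. dominating n E S} \<times> {f. tropical c f S})"
  have "finite \<K>"
    unfolding \<K>_def by (rule finite_subset[of _ "Pow {..<n}"]) auto
  have "real (Xc n c \<omega>) = (\<Sum>S\<in>\<K>. indicator (A S) \<omega>)" for \<omega>
  proof -
    have "Xc n c \<omega> = card {S\<in>\<K>. \<omega> \<in> A S}"
      unfolding Xc_def \<K>_def A_def by (rule arg_cong[where f = card]) (auto simp: mem_Times_iff)
    then show ?thesis
      using \<open>finite \<K>\<close> by (simp add: indicator_def sum.If_cases Int_def)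
  qed
  then have "measure_pmf.expectation (Gnpc n p c) (\<lambda>\<omega>. real (Xc n c \<omega>))
      = (\<Sum>S\<in>\<K>. measure_pmf.prob (Gnp n p) {E. dominating n E S}
               * measure_pmf.prob (colouring n c) {f. tropical c f S})"
    by (simp add: Bochner_Integration.integral_sum[OF measure_pmf.integrable_const_bound[where B = 1]]
        A_def Gnpc_def measure_pair_pmf_Times)
  also have "\<dots> \<ge> (\<Sum>S\<in>\<K>. (1 - (1 - p) ^ c) ^ (n - c) * (fact c / real c ^ c))"
  proof (rule sum_mono)
    fix S assume "S \<in> \<K>"
    then have "S \<subseteq> {..<n}" "card S = c"
      by (auto simp: \<K>_def)
    moreover have "0 \<le> (1 - (1 - p) ^ c) ^ (n - c)"
      using p by (simp add: power_le_one)
    ultimately show "(1 - (1 - p) ^ c) ^ (n - c) * (fact c / real c ^ c)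
        \<le> measure_pmf.prob (Gnp n p) {E. dominating n E S}
          * measure_pmf.prob (colouring n c) {f. tropical c f S}"
      using prob_Gnp_dominating[OF p _ _ \<open>c < n\<close>] prob_colouring_tropical_ge
      by (metis mult_left_mono)
  qed
  finally show ?thesis
    by (simp add: \<K>_def n_subsets mult.assoc)
qed

lemma expectation_Xc_ge_power:
  fixes p :: real
  assumes p: "0 \<le> p" "p \<le> 1" and "1 \<le> c" "c < n"
  shows "(real n / real c ^ 2) ^ c * (1 - (1 - p) ^ c) ^ n
    \<le> measure_pmf.expectation (Gnpc n p c) (\<lambda>\<omega>. real (Xc n c \<omega>))"
proof -
  have q: "0 \<le> 1 - (1 - p) ^ c" "1 - (1 - p) ^ c \<le> 1"
    using p by (simp_all add: power_le_one)
  have "(real n / real c ^ 2) ^ c * (1 - (1 - p) ^ c) ^ n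
      = (real n / real c) ^ c * (1 - (1 - p) ^ c) ^ n * (1 / real c ^ c)"
    by (simp add: power2_eq_square power_divide power_mult_distrib)
  also have "\<dots> \<le> real (n choose c) * (1 - (1 - p) ^ c) ^ (n - c) * (fact c / real c ^ c)"
    using q \<open>c < n\<close>
    by (intro mult_mono binomial_ge_n_over_k_pow_k power_decreasing divide_right_mono)
       (auto simp: fact_ge_1)
  also have "\<dots> \<le> measure_pmf.expectation (Gnpc n p c) (\<lambda>\<omega>. real (Xc n c \<omega>))"
    by (rule expectation_Xc_ge[OF p \<open>c < n\<close>])
  finally show ?thesis .
qed

lemma cfun_bounds:
  fixes p :: real and n :: nat
  defines "a \<equiv> ln (1 / (1 - p))"
  defines "L \<equiv> ln (real n) / a"
  defines "r \<equiv> L - ln (L * ln (real n)) / a"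
  assumes "0 < p" "p < 1" and "1 \<le> L * ln (real n)" and "0 \<le> r"
  shows "r + 1 \<le> real (cfun p n)" "real (cfun p n) \<le> L + 2"
proof -
  have "0 < a"
    using assms by (simp add: a_def)
  have "real (cfun p n) = real_of_int (\<lfloor>r\<rfloor> + 2)"
    using \<open>0 \<le> r\<close> by (simp add: cfun_def Let_def r_def L_def a_def log_def)
  moreover have "r \<le> L"
    using \<open>0 < a\<close> \<open>1 \<le> L * ln (real n)\<close> by (simp add: r_def)
  ultimately show "r + 1 \<le> real (cfun p n)" "real (cfun p n) \<le> L + 2"
    by linarith+
qed

lemma cfun_power_le:
  fixes p :: real and n :: nat
  defines "a \<equiv> ln (1 / (1 - p))"
  defines "L \<equiv> ln (real n) / a"
  defines "r \<equiv> L - ln (L * ln (real n)) / a"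
  assumes p: "0 < p" "p < 1" and L: "1 \<le> L * ln (real n)" and r: "0 \<le> r"
  shows "(1 - p) ^ cfun p n \<le> (1 - p) * (L * ln (real n)) / real n"
proof -
  have "0 < real n"
    using \<open>1 \<le> L * ln (real n)\<close> by (cases "n = 0") auto
  have "(1 - p) ^ cfun p n = (1 - p) powr real (cfun p n)"
    using p by (simp add: powr_realpow)
  also have "\<dots> \<le> (1 - p) powr (r + 1)"
    using p cfun_bounds(1)[OF p L[unfolded L_def a_def] r[unfolded r_def L_def a_def]]
    unfolding r_def L_def a_def by (intro powr_mono') auto
  also have "\<dots> = (1 - p) * exp (- a * r)"
    using p by (simp add: powr_def a_def ln_div distrib_right exp_add mult.commute)
  also have "- a * r = ln (L * ln (real n)) - ln (real n)"
    using p by (simp add: r_def L_def a_def field_simps)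
  also have "exp \<dots> = L * ln (real n) / real n"
    using \<open>0 < real n\<close> \<open>1 \<le> L * ln (real n)\<close> by (simp add: exp_diff)
  finally show ?thesis
    by simp
qed

lemma expectation_Xc_cfun_ge:
  fixes p :: real and n :: nat
  defines "a \<equiv> ln (1 / (1 - p))"
  defines "L \<equiv> ln (real n) / a"
  defines "r \<equiv> L - ln (L * ln (real n)) / a"
  defines "y \<equiv> (1 - p) * (L * ln (real n)) / real n"
  assumes p: "0 < p" "p < 1" and L: "1 \<le> L * ln (real n)" and r: "0 \<le> r"
    and n: "(L + 2) ^ 2 \<le> real n" and y: "y \<le> 1 / 2"
  shows "exp ((r + 1) * (ln (real n) - 2 * ln (L + 2)) - real n * (y + 2 * y ^ 2))
    \<le> measure_pmf.expectation (Gnpc n p (cfun p n)) (\<lambda>\<omega>. real (Xc n (cfun p n) \<omega>))"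
proof -
  define c where "c = cfun p n"
  define q where "q = (1 - p) ^ c"
  have c: "r + 1 \<le> real c" "real c \<le> L + 2"
    using cfun_bounds[OF p L[unfolded L_def a_def] r[unfolded r_def L_def a_def]]
    by (simp_all add: c_def r_def L_def a_def)
  have "q \<le> y"
    using cfun_power_le[OF p L[unfolded L_def a_def] r[unfolded r_def L_def a_def]]
    by (simp add: q_def c_def y_def L_def a_def)
  have "0 \<le> q" "q < 1"
    using p \<open>q \<le> y\<close> y by (simp_all add: q_def)
  have "1 < real n"
    using L by (cases "n = 0 \<or> n = 1") auto
  have "0 < L"
    using L \<open>1 < real n\<close> by (smt (verit) ln_gt_zero mult_nonpos_nonneg)
  have "L + 2 < (L + 2) ^ 2"
    using \<open>0 < L\<close> by (simp add: power2_eq_square algebra_simps add_pos_pos)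
  then have "1 \<le> c" "c < n"
    using c r n by linarith+
  have "2 * ln (L + 2) = ln ((L + 2) ^ 2)"
    using \<open>0 < L\<close> by (simp add: ln_realpow)
  also have "\<dots> \<le> ln (real n)"
    using n \<open>0 < L\<close> \<open>1 < real n\<close> by (subst ln_le_cancel_iff) auto
  finally have "2 * ln (L + 2) \<le> ln (real n)" .
  moreover have "ln (real c) \<le> ln (L + 2)"
    using c \<open>1 \<le> c\<close> by simp
  ultimately have dominant: "(r + 1) * (ln (real n) - 2 * ln (L + 2))
      \<le> real c * (ln (real n) - 2 * ln (real c))"
    using c r by (intro mult_mono) auto
  have "- (y + 2 * y ^ 2) \<le> - q - 2 * q ^ 2"
    using \<open>0 \<le> q\<close> \<open>q \<le> y\<close> power_mono[OF \<open>q \<le> y\<close> \<open>0 \<le> q\<close>, of 2] by linarith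
  also have "\<dots> \<le> ln (1 - q)"
    using \<open>0 \<le> q\<close> \<open>q \<le> y\<close> y by (intro ln_one_minus_pos_lower_bound) auto
  finally have "real n * (- (y + 2 * y ^ 2)) \<le> real n * ln (1 - q)"
    by (rule mult_left_mono) simp
  with dominant have "exp ((r + 1) * (ln (real n) - 2 * ln (L + 2)) - real n * (y + 2 * y ^ 2))
      \<le> exp (real c * (ln (real n) - 2 * ln (real c)) + real n * ln (1 - q))"
    by (simp add: algebra_simps)
  also have "\<dots> = exp (real c * ln (real n / real c ^ 2)) * exp (real n * ln (1 - q))"
    using \<open>1 \<le> c\<close> \<open>1 < real n\<close> by (simp add: ln_div ln_realpow exp_add)
  also have "\<dots> = (real n / real c ^ 2) ^ c * (1 - q) ^ n"
    using \<open>1 \<le> c\<close> \<open>1 < real n\<close> \<open>q < 1\<close> by (simp add: powr_def flip: powr_realpow)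
  also have "\<dots> \<le> measure_pmf.expectation (Gnpc n p c) (\<lambda>\<omega>. real (Xc n c \<omega>))"
    unfolding q_def using p \<open>1 \<le> c\<close> \<open>c < n\<close> by (intro expectation_Xc_ge_power) auto
  finally show ?thesis
    by (simp add: c_def)
qed

theorem mainTheorem9:
  fixes p :: real
  assumes "0 < p" and "p < 1"
  shows "filterlim (\<lambda>n. measure_pmf.expectation (Gnpc n p (cfun p n))
            (\<lambda>\<omega>. real (Xc n (cfun p n) \<omega>))) at_top sequentially"
proof -
  define a where "a = ln (1 / (1 - p))"
  have "0 < a"
    using assms by (simp add: a_def)
  define F where "F x = exp ((ln x / a - ln (ln x / a * ln x) / a + 1) * (ln x - 2 * ln (ln x / a + 2))
    - x * ((1 - p) * (ln x / a * ln x) / x + 2 * ((1 - p) * (ln x / a * ln x) / x) ^ 2))" for x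
  have "filterlim F at_top at_top"
    unfolding F_def using \<open>0 < a\<close> assms by real_asymp
  moreover have "\<forall>\<^sub>F x in at_top. 1 \<le> ln x / a * ln x \<and> 0 \<le> ln x / a - ln (ln x / a * ln x) / a
      \<and> (ln x / a + 2) ^ 2 \<le> x \<and> (1 - p) * (ln x / a * ln x) / x \<le> 1 / 2"
    using \<open>0 < a\<close> assms by (intro eventually_conj; real_asymp)
  then have "\<forall>\<^sub>F n in sequentially. F (real n)
      \<le> measure_pmf.expectation (Gnpc n p (cfun p n)) (\<lambda>\<omega>. real (Xc n (cfun p n) \<omega>))"
    unfolding F_def a_def
    by (rule eventually_compose_filterlim[OF _ filterlim_real_sequentially, THEN eventually_mono])
       (use assms expectation_Xc_cfun_ge in auto)
  ultimately show ?thesis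
    by (rule filterlim_at_top_mono[OF filterlim_compose[OF _ filterlim_real_sequentially]])
qed

end
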